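(* Let $D$ be the clover-improved Wilson Dirac operator, let $\{\mathcal{A}_1,\dots,\mathcal{A}_s\}$ be a $\Gamma_5$-compatible aggregation, let $P$ be the corresponding aggregation-based prolongation built from test vectors $v_1,\dots,v_N$ (as in the context), and let $R=(\Gamma_5P)^H$. Consider the two coarse grid operators $D_c^{PG}=RDP$ and $D_c=P^HDP$. Then: (i) $D_c=\Gamma_5^cD_c^{PG}$; (ii) $I-PD_c^{-1}P^HD=I-P(D_c^{PG})^{-1}RD$ (whenever these inverses exist); (iii) $D_c^{PG}$ is hermitian, and $D_c$ is $\Gamma_5^c$-symmetric, i.e. $(\Gamma_5^cD_c)^H=\Gamma_5^cD_c$; (iv) for the fields of values, $\mathcal{F}(D_c)\subseteq\mathcal{F}(D)$, where $\mathcal{F}(A)=\{\psi^HA\psi:\psi^H\psi=1\}$.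
   Context: Let $\mathcal{L}$ be a periodic four-dimensional $N_t\times N_s^3$ lattice with $n_{\mathcal{L}}$ sites and shift vectors $\hat\mu$ ($\mu=0,\dots,3$, spacing $a$). Let $\mathcal{C}=\{1,2,3\}$ (colors), $\mathcal{S}=\{0,1,2,3\}$ (spins), and $\mathcal{V}=\mathcal{L}\times\mathcal{C}\times\mathcal{S}$ the set of $n=12n_{\mathcal{L}}$ variables; vectors in $\mathbb{C}^n$ are fields $\psi(x)\in\mathbb{C}^4\otimes\mathbb{C}^3$. A configuration consists of $U_\mu(x)\in\mathrm{SU}(3)$. The matrices $\gamma_0,\dots,\gamma_3\in\mathbb{C}^{4\times4}$ are hermitian, unitary, with $\gamma_\mu\gamma_\nu+\gamma_\nu\gamma_\mu=2\delta_{\mu\nu}I_4$, and $\gamma_5=\gamma_0\gamma_1\gamma_2\gamma_3=\mathrm{diag}(1,1,-1,-1)$ (acting as $+1$ on spins 0,1 and $-1$ on spins 2,3). The clover-improved Wilson Dirac operator $D$ (real parameters $m_0,c_{sw}$) is $(D\psi)(x)=\Big(\tfrac{m_0+4}{a}I_{12}-\tfrac{c_{sw}}{32a}\sum_{\mu,\nu}(\gamma_\mu\gamma_\nu)\otimes(Q_{\mu\nu}(x)-Q_{\nu\mu}(x))\Big)\psi(x)-\tfrac{1}{2a}\sum_{\mu}\big((I_4-\gamma_\mu)\otimes U_\mu(x)\big)\psi(x+\hat\mu)-\tfrac{1}{2a}\sum_{\mu}\big((I_4+\gamma_\mu)\otimes U_\mu(x-\hat\mu)^H\big)\psi(x-\hat\mu)$,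 with $Q_{\mu\nu}(x)$ the sum of the four oriented plaquette products of links around $x$ in the $\mu\nu$-plane. With $\Gamma_5=I_{n_{\mathcal{L}}}\otimes\gamma_5\otimes I_3$, $D$ satisfies $(\Gamma_5D)^H=\Gamma_5D$. An aggregation is a partition $\{\mathcal{A}_1,\dots,\mathcal{A}_s\}$ of $\mathcal{V}$; it is $\Gamma_5$-compatible if each $\mathcal{A}_i$ consists exclusively of variables with spin in $\{0,1\}$ or exclusively of variables with spin in $\{2,3\}$. Given test vectors $v_1,\dots,v_N\in\mathbb{C}^n$, let $\mathcal{I}_{\mathcal{A}_i}^Tv$ denote the vector agreeing with $v$ on $\mathcal{A}_i$ and zero elsewhere. The aggregation-based prolongation $P\in\mathbb{C}^{n\times sN}$ has, for each $i$, columns $(i-1)N+1,\dots,iN$ equal to an orthonormal basis of $\mathrm{span}(\mathcal{I}_{\mathcal{A}_i}^Tv_1,\dots,\mathcal{I}_{\mathcal{A}_i}^Tv_N)$ (these restrictions being linearly independent); thus each column of $P$ is supported in a single aggregate and $P^HP=I$. $\Gamma_5^c$ is the $sN\times sN$ diagonal matrix with entry $+1$ on coarse variables belonging to aggregates of spins $\{0,1\}$ and $-1$ on those belonging to aggregates of spins $\{2,3\}$ (so that $\Gamma_5P=P\Gamma_5^c$). *)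

theory Defs
  imports "Jordan_Normal_Form.Matrix" "Jordan_Normal_Form.Determinant"
begin

definition adj :: "complex mat \<Rightarrow> complex mat" where
  "adj A = mat (dim_col A) (dim_row A) (\<lambda>(i,j). cnj (A $$ (j,i)))"

definition cinner :: "complex vec \<Rightarrow> complex vec \<Rightarrow> complex" where
  "cinner u w = (\<Sum>k<dim_vec u. cnj (u $ k) * w $ k)"

definition fov :: "complex mat \<Rightarrow> complex set" where
  "fov A = {cinner \<psi> (A *\<^sub>v \<psi>) | \<psi>. \<psi> \<in> carrier_vec (dim_col A) \<and> cinner \<psi> \<psi> = 1}"

definition SU3 :: "complex mat \<Rightarrow> bool" where
  "SU3 U \<longleftrightarrow> U \<in> carrier_mat 3 3 \<and> adj U * U = 1\<^sub>m 3 \<and> U * adj U = 1\<^sub>m 3 \<and> det U = 1"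

definition cspan :: "nat \<Rightarrow> nat \<Rightarrow> (nat \<Rightarrow> complex vec) \<Rightarrow> complex vec set" where
  "cspan n N w = {vec n (\<lambda>k. \<Sum>l<N. c l * w l $ k) | c. True}"

definition lin_indep :: "nat \<Rightarrow> nat \<Rightarrow> (nat \<Rightarrow> complex vec) \<Rightarrow> bool" where
  "lin_indep n N w \<longleftrightarrow> (\<forall>c. (\<forall>k<n. (\<Sum>l<N. c l * w l $ k) = 0) \<longrightarrow> (\<forall>l<N. c l = 0))"

text \<open>Sites are encoded by linear indices x < n_L = N_t * N_s^3; coordinate 0 (time) is the
  fastest running one. Variables (site, spin, colour) are encoded as 12*x + 3*spin + colour,
  so that psi(x) in C^4 (x) C^3 is ordered spin-major (Kronecker convention).\<close>

definition nsites :: "nat \<Rightarrow> nat \<Rightarrow> nat" where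
  "nsites Nt Ns = Nt * Ns ^ 3"

definition extent :: "nat \<Rightarrow> nat \<Rightarrow> nat \<Rightarrow> nat" where
  "extent Nt Ns \<mu> = (if \<mu> = 0 then Nt else Ns)"

definition stride :: "nat \<Rightarrow> nat \<Rightarrow> nat \<Rightarrow> nat" where
  "stride Nt Ns \<mu> = (if \<mu> = 0 then 1 else Nt * Ns ^ (\<mu> - 1))"

definition coord :: "nat \<Rightarrow> nat \<Rightarrow> nat \<Rightarrow> nat \<Rightarrow> nat" where
  "coord Nt Ns \<mu> x = (x div stride Nt Ns \<mu>) mod extent Nt Ns \<mu>"

text \<open>shift Nt Ns mu d x = x + d * hat mu (periodic), for d = 1 or d = -1.\<close>
definition shift :: "nat \<Rightarrow> nat \<Rightarrow> nat \<Rightarrow> int \<Rightarrow> nat \<Rightarrow> nat" where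
  "shift Nt Ns \<mu> d x =
     x - coord Nt Ns \<mu> x * stride Nt Ns \<mu>
       + nat ((int (coord Nt Ns \<mu> x) + d) mod int (extent Nt Ns \<mu>)) * stride Nt Ns \<mu>"

definition site_of :: "nat \<Rightarrow> nat" where "site_of k = k div 12"
definition spin_of :: "nat \<Rightarrow> nat" where "spin_of k = (k mod 12) div 3"
definition color_of :: "nat \<Rightarrow> nat" where "color_of k = k mod 3"

text \<open>U x mu is the link U_mu(x). Q_{mu nu}(x): sum of the four oriented plaquettes at x.\<close>
definition Qpl :: "nat \<Rightarrow> nat \<Rightarrow> (nat \<Rightarrow> nat \<Rightarrow> complex mat) \<Rightarrow> nat \<Rightarrow> nat \<Rightarrow> nat \<Rightarrow> complex mat" where
  "Qpl Nt Ns U \<mu> \<nu> x =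
    (let fw = (\<lambda>\<rho> y. shift Nt Ns \<rho> 1 y); bw = (\<lambda>\<rho> y. shift Nt Ns \<rho> (-1) y) in
       U x \<mu> * U (fw \<mu> x) \<nu> * adj (U (fw \<nu> x) \<mu>) * adj (U x \<nu>)
     + U x \<nu> * adj (U (bw \<mu> (fw \<nu> x)) \<mu>) * adj (U (bw \<mu> x) \<nu>) * U (bw \<mu> x) \<mu>
     + adj (U (bw \<mu> x) \<mu>) * adj (U (bw \<nu> (bw \<mu> x)) \<nu>) * U (bw \<nu> (bw \<mu> x)) \<mu> * U (bw \<nu> x) \<nu>
     + adj (U (bw \<nu> x) \<nu>) * U (bw \<nu> x) \<mu> * U (fw \<mu> (bw \<nu> x)) \<nu> * adj (U x \<mu>))"

definition dirac :: "nat \<Rightarrow> nat \<Rightarrow> real \<Rightarrow> real \<Rightarrow> real \<Rightarrow> (nat \<Rightarrow> complex mat)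
                     \<Rightarrow> (nat \<Rightarrow> nat \<Rightarrow> complex mat) \<Rightarrow> complex mat" where
  "dirac Nt Ns a m0 csw \<gamma> U =
    mat (12 * nsites Nt Ns) (12 * nsites Nt Ns) (\<lambda>(i,j).
      let x = site_of i; y = site_of j; si = spin_of i; sj = spin_of j;
          ci = color_of i; cj = color_of j in
      (if x = y then
          (if si = sj \<and> ci = cj then complex_of_real ((m0 + 4) / a) else 0)
          - complex_of_real (csw / (32 * a)) *
              (\<Sum>\<mu><4. \<Sum>\<nu><4. (\<gamma> \<mu> * \<gamma> \<nu>) $$ (si, sj) *
                  (Qpl Nt Ns U \<mu> \<nu> x - Qpl Nt Ns U \<nu> \<mu> x) $$ (ci, cj))
       else 0)
      - complex_of_real (1 / (2 * a)) *
          (\<Sum>\<mu><4. if y = shift Nt Ns \<mu> 1 x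
                   then (1\<^sub>m 4 - \<gamma> \<mu>) $$ (si, sj) * U x \<mu> $$ (ci, cj) else 0)
      - complex_of_real (1 / (2 * a)) *
          (\<Sum>\<mu><4. if y = shift Nt Ns \<mu> (-1) x
                   then (1\<^sub>m 4 + \<gamma> \<mu>) $$ (si, sj) * adj (U (shift Nt Ns \<mu> (-1) x) \<mu>) $$ (ci, cj)
                   else 0))"

text \<open>Gamma_5 = I_{n_L} (x) gamma_5 (x) I_3 with gamma_5 = gamma_0 gamma_1 gamma_2 gamma_3.\<close>
definition Gamma5 :: "nat \<Rightarrow> (nat \<Rightarrow> complex mat) \<Rightarrow> complex mat" where
  "Gamma5 nL \<gamma> = mat (12 * nL) (12 * nL) (\<lambda>(i,j).
     if site_of i = site_of j \<and> color_of i = color_of j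
     then (\<gamma> 0 * \<gamma> 1 * \<gamma> 2 * \<gamma> 3) $$ (spin_of i, spin_of j) else 0)"

definition gamma5_diag :: "complex mat" where
  "gamma5_diag = mat 4 4 (\<lambda>(i,j). if i = j then (if i < 2 then 1 else -1) else 0)"

definition gamma_matrices :: "(nat \<Rightarrow> complex mat) \<Rightarrow> bool" where
  "gamma_matrices \<gamma> \<longleftrightarrow>
     (\<forall>\<mu><4. \<gamma> \<mu> \<in> carrier_mat 4 4 \<and> adj (\<gamma> \<mu>) = \<gamma> \<mu> \<and> adj (\<gamma> \<mu>) * \<gamma> \<mu> = 1\<^sub>m 4) \<and>
     (\<forall>\<mu><4. \<forall>\<nu><4. \<gamma> \<mu> * \<gamma> \<nu> + \<gamma> \<nu> * \<gamma> \<mu> = (if \<mu> = \<nu> then 2 \<cdot>\<^sub>m 1\<^sub>m 4 else 0\<^sub>m 4 4)) \<and>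
     \<gamma> 0 * \<gamma> 1 * \<gamma> 2 * \<gamma> 3 = gamma5_diag"

definition is_aggregation :: "nat \<Rightarrow> nat \<Rightarrow> (nat \<Rightarrow> nat set) \<Rightarrow> bool" where
  "is_aggregation n s A \<longleftrightarrow>
     (\<forall>i<s. A i \<noteq> {}) \<and> (\<forall>i<s. \<forall>j<s. i \<noteq> j \<longrightarrow> A i \<inter> A j = {}) \<and>
     (\<Union>i<s. A i) = {0..<n}"

definition gamma5_compatible :: "nat \<Rightarrow> (nat \<Rightarrow> nat set) \<Rightarrow> bool" where
  "gamma5_compatible s A \<longleftrightarrow>
     (\<forall>i<s. (\<forall>k\<in>A i. spin_of k \<in> {0,1}) \<or> (\<forall>k\<in>A i. spin_of k \<in> {2,3}))"

definition restr :: "nat set \<Rightarrow> complex vec \<Rightarrow> complex vec" where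
  "restr S v = vec (dim_vec v) (\<lambda>k. if k \<in> S then v $ k else 0)"

definition is_agg_prolongation ::
  "nat \<Rightarrow> nat \<Rightarrow> (nat \<Rightarrow> nat set) \<Rightarrow> nat \<Rightarrow> (nat \<Rightarrow> complex vec) \<Rightarrow> complex mat \<Rightarrow> bool" where
  "is_agg_prolongation n s A N v P \<longleftrightarrow>
     P \<in> carrier_mat n (s * N) \<and>
     (\<forall>i<s.
        (\<forall>l<N. \<forall>l'<N. cinner (col P (i * N + l)) (col P (i * N + l')) = (if l = l' then 1 else 0)) \<and>
        cspan n N (\<lambda>l. col P (i * N + l)) = cspan n N (\<lambda>l. restr (A i) (v l)))"

definition Gamma5c :: "nat \<Rightarrow> (nat \<Rightarrow> nat set) \<Rightarrow> nat \<Rightarrow> complex mat" where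
  "Gamma5c s A N = mat (s * N) (s * N) (\<lambda>(p,q).
     if p = q then (if (\<forall>k\<in>A (p div N). spin_of k \<in> {0,1}) then 1 else -1) else 0)"

end

theory Submission
  imports Defs
begin

text \<open>Gamma_5 is diagonal with entries +1 and -1 according to the spin of a variable, and a
  Gamma_5-compatible aggregation puts every column of P into a single chirality sector, so
  Gamma_5 P = P Gamma_5^c with Gamma_5^c a hermitian involution. Hence R = Gamma_5^c P^H, and all
  four statements are matrix algebra: P^H D P = Gamma_5^c R D P; the coarse inverses are related
  by (P^H D P)^-1 = (R D P)^-1 Gamma_5^c; R D P = P^H (Gamma_5 D) P inherits hermiticity from
  Gamma_5 D; and since P^H P = I, psi^H P^H D P psi = (P psi)^H D (P psi) with P psi again a
  unit vector. The hermiticity of Gamma_5 D rests on gamma_5 anticommuting with every gamma_mu,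
  on the hermiticity of the gamma_mu and on Q_mu_nu^H = Q_nu_mu, which in turn needs the
  periodic shifts to be invertible and to commute.\<close>

section \<open>Periodic lattice geometry\<close>

definition site_index :: "nat \<Rightarrow> nat \<Rightarrow> (nat \<Rightarrow> nat) \<Rightarrow> nat" where
  "site_index Nt Ns c = (\<Sum>\<nu><4. c \<nu> * stride Nt Ns \<nu>)"

definition coords_in_range :: "nat \<Rightarrow> nat \<Rightarrow> (nat \<Rightarrow> nat) \<Rightarrow> bool" where
  "coords_in_range Nt Ns c \<longleftrightarrow> (\<forall>\<nu><4. c \<nu> < extent Nt Ns \<nu>)"

definition shifted_coord :: "nat \<Rightarrow> nat \<Rightarrow> nat \<Rightarrow> int \<Rightarrow> nat \<Rightarrow> nat" where
  "shifted_coord Nt Ns \<mu> d c = nat ((int c + d) mod int (extent Nt Ns \<mu>))"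

lemma site_index_expand: "site_index Nt Ns c = c 0 + Nt * (c 1 + Ns * (c 2 + Ns * c 3))"
  by (simp add: site_index_def stride_def eval_nat_numeral algebra_simps)

lemma coords_in_rangeD:
  assumes "coords_in_range Nt Ns c"
  shows "c 0 < Nt" "c 1 < Ns" "c 2 < Ns" "c 3 < Ns"
proof -
  have "c \<nu> < extent Nt Ns \<nu>" if "\<nu> < 4" for \<nu>
    using assms that by (simp add: coords_in_range_def)
  from this[of 0] this[of 1] this[of 2] this[of 3]
  show "c 0 < Nt" "c 1 < Ns" "c 2 < Ns" "c 3 < Ns" by (simp_all add: extent_def)
qed

lemma add_mult_less_mult: "(a::nat) < m \<Longrightarrow> b < k \<Longrightarrow> a + m * b < m * k"
proof -
  assume "a < m" "b < k"
  then have "a + m * b < m * (b + 1)" by simp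
  also have "\<dots> \<le> m * k" using \<open>b < k\<close> by (intro mult_le_mono2) simp
  finally show ?thesis .
qed

lemma site_index_less:
  assumes "coords_in_range Nt Ns c"
  shows "site_index Nt Ns c < nsites Nt Ns"
proof -
  note c = coords_in_rangeD[OF assms]
  have "c 2 + Ns * c 3 < Ns * Ns" using c by (intro add_mult_less_mult)
  then have "c 1 + Ns * (c 2 + Ns * c 3) < Ns * (Ns * Ns)" using c by (intro add_mult_less_mult)
  then have "c 0 + Nt * (c 1 + Ns * (c 2 + Ns * c 3)) < Nt * (Ns * (Ns * Ns))"
    using c by (intro add_mult_less_mult)
  then show ?thesis by (simp add: site_index_expand nsites_def eval_nat_numeral)
qed

lemma coord_site_index:
  assumes "coords_in_range Nt Ns c" "\<mu> < 4"
  shows "coord Nt Ns \<mu> (site_index Nt Ns c) = c \<mu>"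
proof -
  note c = coords_in_rangeD[OF assms(1)]
  have d1: "site_index Nt Ns c div Nt = c 1 + Ns * (c 2 + Ns * c 3)"
    using c by (simp add: site_index_expand)
  have d2: "site_index Nt Ns c div (Nt * Ns) = c 2 + Ns * c 3"
    using c by (simp add: d1 div_mult2_eq)
  have "site_index Nt Ns c div (Nt * Ns^2) = site_index Nt Ns c div (Nt * Ns) div Ns"
    by (simp add: power2_eq_square mult.assoc div_mult2_eq)
  then have d3: "site_index Nt Ns c div (Nt * Ns^2) = c 3" using c d2 by simp
  from \<open>\<mu> < 4\<close> consider "\<mu> = 0" | "\<mu> = 1" | "\<mu> = 2" | "\<mu> = 3" by linarith
  then show ?thesis
    by cases (use c d1 d2 d3 in \<open>simp_all add: coord_def stride_def extent_def site_index_expand\<close>)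
qed

lemma site_index_coord:
  assumes "x < nsites Nt Ns"
  shows "site_index Nt Ns (\<lambda>\<nu>. coord Nt Ns \<nu> x) = x"
proof -
  define q1 where "q1 = x div Nt"
  define q2 where "q2 = q1 div Ns"
  define q3 where "q3 = q2 div Ns"
  have c0: "coord Nt Ns 0 x = x mod Nt" by (simp add: coord_def stride_def extent_def)
  have c1: "coord Nt Ns 1 x = q1 mod Ns" by (simp add: coord_def stride_def extent_def q1_def)
  have c2: "coord Nt Ns 2 x = q2 mod Ns"
    by (simp add: coord_def stride_def extent_def q1_def q2_def div_mult2_eq)
  have q3: "x div (Nt * Ns^2) = q3"
    by (simp add: q1_def q2_def q3_def power2_eq_square mult.assoc div_mult2_eq)
  have "x < Ns * (Nt * Ns^2)"
    using assms by (simp add: nsites_def power3_eq_cube power2_eq_square ac_simps)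
  moreover have "Nt * Ns^2 > 0" using assms by (auto simp: nsites_def intro: ccontr)
  ultimately have "q3 < Ns" by (simp add: q3[symmetric] div_less_iff_less_mult)
  then have c3: "coord Nt Ns 3 x = q3" using q3 by (simp add: coord_def stride_def extent_def)
  have "x = x mod Nt + Nt * (q1 mod Ns + Ns * (q2 mod Ns + Ns * q3))"
    by (simp add: q1_def q2_def q3_def)
  then show ?thesis unfolding site_index_expand c0 c1 c2 c3 by simp
qed

lemma shifted_coord_less: "Nt > 0 \<Longrightarrow> Ns > 0 \<Longrightarrow> shifted_coord Nt Ns \<mu> d c < extent Nt Ns \<mu>"
  by (simp add: shifted_coord_def extent_def nat_less_iff)

lemma site_index_update:
  "\<mu> < 4 \<Longrightarrow> site_index Nt Ns (c(\<mu> := b))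
     = site_index Nt Ns c - c \<mu> * stride Nt Ns \<mu> + b * stride Nt Ns \<mu>"
proof -
  assume "\<mu> < 4"
  then consider "\<mu> = 0" | "\<mu> = 1" | "\<mu> = 2" | "\<mu> = 3" by linarith
  then show ?thesis by cases (simp_all add: site_index_def stride_def eval_nat_numeral)
qed

lemma shift_site_index:
  assumes "coords_in_range Nt Ns c" "\<mu> < 4"
  shows "shift Nt Ns \<mu> d (site_index Nt Ns c)
       = site_index Nt Ns (c(\<mu> := shifted_coord Nt Ns \<mu> d (c \<mu>)))"
  by (simp only: shift_def coord_site_index[OF assms] site_index_update[OF assms(2)] shifted_coord_def)

locale periodic_lattice =
  fixes Nt Ns :: nat
  assumes Nt_pos: "Nt > 0" and Ns_pos: "Ns > 0"
begin

abbreviation coords :: "nat \<Rightarrow> nat \<Rightarrow> nat" where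
  "coords x \<equiv> \<lambda>\<nu>. coord Nt Ns \<nu> x"

lemma coords_in_range_coords: "coords_in_range Nt Ns (coords x)"
  using Nt_pos Ns_pos by (simp add: coords_in_range_def coord_def extent_def)

lemma coords_in_range_update:
  "coords_in_range Nt Ns c \<Longrightarrow> coords_in_range Nt Ns (c(\<mu> := shifted_coord Nt Ns \<mu> d (c \<mu>)))"
  using shifted_coord_less Nt_pos Ns_pos by (simp add: coords_in_range_def)

lemma shift_coords:
  assumes "x < nsites Nt Ns" "\<mu> < 4"
  shows "shift Nt Ns \<mu> d x = site_index Nt Ns ((coords x)(\<mu> := shifted_coord Nt Ns \<mu> d (coords x \<mu>)))"
proof -
  have "shift Nt Ns \<mu> d x = shift Nt Ns \<mu> d (site_index Nt Ns (coords x))"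
    using site_index_coord[OF assms(1)] by simp
  also have "\<dots> = site_index Nt Ns ((coords x)(\<mu> := shifted_coord Nt Ns \<mu> d (coords x \<mu>)))"
    by (rule shift_site_index[OF coords_in_range_coords assms(2)])
  finally show ?thesis .
qed

lemma shift_less:
  assumes "x < nsites Nt Ns" "\<mu> < 4"
  shows "shift Nt Ns \<mu> d x < nsites Nt Ns"
  unfolding shift_coords[OF assms]
  by (intro site_index_less coords_in_range_update coords_in_range_coords)

lemma shifted_coord_neg:
  assumes "c < extent Nt Ns \<mu>"
  shows "shifted_coord Nt Ns \<mu> (-d) (shifted_coord Nt Ns \<mu> d c) = c"
proof -
  have "extent Nt Ns \<mu> > 0" using Nt_pos Ns_pos by (simp add: extent_def)
  then have "int (shifted_coord Nt Ns \<mu> d c) = (int c + d) mod int (extent Nt Ns \<mu>)"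
    by (simp add: shifted_coord_def)
  then have "(int (shifted_coord Nt Ns \<mu> d c) - d) mod int (extent Nt Ns \<mu>) = int c"
    using assms by (simp add: mod_simps)
  then show ?thesis by (simp add: shifted_coord_def)
qed

lemma shift_neg_shift:
  assumes "x < nsites Nt Ns" "\<mu> < 4"
  shows "shift Nt Ns \<mu> (-d) (shift Nt Ns \<mu> d x) = x"
proof -
  define c where "c = coords x"
  have c: "coords_in_range Nt Ns c" unfolding c_def by (rule coords_in_range_coords)
  then have "c \<mu> < extent Nt Ns \<mu>" using assms(2) by (simp add: coords_in_range_def)
  moreover have "x = site_index Nt Ns c" unfolding c_def using site_index_coord[OF assms(1)] by simp
  ultimately show ?thesis
    using shifted_coord_neg
    by (simp add: shift_site_index[OF c assms(2)] shift_site_index[OF coords_in_range_update[OF c] assms(2)])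
qed

lemma shift_commute:
  assumes "x < nsites Nt Ns" "\<mu> < 4" "\<nu> < 4" "\<mu> \<noteq> \<nu>"
  shows "shift Nt Ns \<mu> d (shift Nt Ns \<nu> e x) = shift Nt Ns \<nu> e (shift Nt Ns \<mu> d x)"
proof -
  define c where "c = coords x"
  have c: "coords_in_range Nt Ns c" unfolding c_def by (rule coords_in_range_coords)
  have "x = site_index Nt Ns c" unfolding c_def using site_index_coord[OF assms(1)] by simp
  then show ?thesis
    using assms(4)
    by (simp add: shift_site_index[OF c] shift_site_index[OF coords_in_range_update[OF c]]
        assms(2,3) fun_upd_twist)
qed

end

lemma dim_adj [simp]: "dim_row (adj A) = dim_col A" "dim_col (adj A) = dim_row A"
  by (simp_all add: adj_def)

lemma adj_index [simp]: "i < dim_col A \<Longrightarrow> j < dim_row A \<Longrightarrow> adj A $$ (i, j) = cnj (A $$ (j, i))"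
  by (simp add: adj_def)

lemma adj_carrier: "A \<in> carrier_mat m n \<Longrightarrow> adj A \<in> carrier_mat n m"
  unfolding carrier_mat_def by simp

lemma adj_adj [simp]: "adj (adj A) = A"
  by (rule eq_matI) simp_all

lemma adj_mult:
  assumes "A \<in> carrier_mat m n" "B \<in> carrier_mat n p"
  shows "adj (A * B) = adj B * adj A"
  by (rule eq_matI) (use assms in \<open>auto simp: scalar_prod_def mult.commute\<close>)

lemma adj_add:
  assumes "A \<in> carrier_mat m n" "B \<in> carrier_mat m n"
  shows "adj (A + B) = adj A + adj B"
  by (rule eq_matI) (use assms in auto)

lemma adj_minus:
  assumes "A \<in> carrier_mat m n" "B \<in> carrier_mat m n"
  shows "adj (A - B) = adj A - adj B"
  by (rule eq_matI) (use assms in auto)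

lemma adj_mult4:
  assumes "A \<in> carrier_mat n n" "B \<in> carrier_mat n n" "C \<in> carrier_mat n n" "D \<in> carrier_mat n n"
  shows "adj (A * B * C * D) = adj D * adj C * adj B * adj A"
proof -
  note adjs = adj_carrier[OF assms(1)] adj_carrier[OF assms(2)] adj_carrier[OF assms(3)]
    adj_carrier[OF assms(4)]
  have AB: "A * B \<in> carrier_mat n n" and ABC: "A * B * C \<in> carrier_mat n n"
    using assms by auto
  have "adj (A * B * C * D) = adj D * (adj C * (adj B * adj A))"
    unfolding adj_mult[OF ABC assms(4)] adj_mult[OF AB assms(3)] adj_mult[OF assms(1,2)] ..
  also have "\<dots> = adj D * adj C * adj B * adj A"
    using adjs by (simp add: assoc_mult_mat[of _ n n _ n _ n])
  finally show ?thesis .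
qed

lemma cinner_mult_mat_vec:
  assumes A: "A \<in> carrier_mat m n" and u: "u \<in> carrier_vec n" and w: "w \<in> carrier_vec m"
  shows "cinner (A *\<^sub>v u) w = cinner u (adj A *\<^sub>v w)"
proof -
  have "cinner (A *\<^sub>v u) w = (\<Sum>k<m. \<Sum>j<n. cnj (A $$ (k, j)) * cnj (u $ j) * w $ k)"
    using A u by (simp add: cinner_def scalar_prod_def atLeast0LessThan sum_distrib_right)
  also have "\<dots> = (\<Sum>j<n. \<Sum>k<m. cnj (A $$ (k, j)) * cnj (u $ j) * w $ k)"
    by (rule sum.swap)
  also have "\<dots> = cinner u (adj A *\<^sub>v w)"
    using A u w
    by (simp add: cinner_def scalar_prod_def atLeast0LessThan sum_distrib_left algebra_simps)
  finally show ?thesis .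
qed

section \<open>Galerkin and Petrov--Galerkin coarse operators\<close>

lemma congruence_carrier:
  "A \<in> carrier_mat n n \<Longrightarrow> P \<in> carrier_mat n m \<Longrightarrow> adj P * A * P \<in> carrier_mat m m"
  by (metis adj_carrier mult_carrier_mat)

lemma fov_galerkin_subset:
  assumes D: "D \<in> carrier_mat n n" and P: "P \<in> carrier_mat n m" and PP: "adj P * P = 1\<^sub>m m"
  shows "fov (adj P * D * P) \<subseteq> fov D"
proof
  fix z assume "z \<in> fov (adj P * D * P)"
  then obtain \<psi> where z: "z = cinner \<psi> ((adj P * D * P) *\<^sub>v \<psi>)"
    and \<psi>: "\<psi> \<in> carrier_vec m" and \<psi>_unit: "cinner \<psi> \<psi> = 1"
    using P by (auto simp: fov_def)
  define \<phi> where "\<phi> = P *\<^sub>v \<psi>"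
  have Pa: "adj P \<in> carrier_mat m n" using P by (rule adj_carrier)
  have \<phi>: "\<phi> \<in> carrier_vec n" using P \<psi> by (simp add: \<phi>_def)
  have "cinner \<phi> \<phi> = cinner \<psi> (adj P *\<^sub>v (P *\<^sub>v \<psi>))"
    using P \<psi> \<phi> by (simp add: \<phi>_def cinner_mult_mat_vec)
  also have "\<dots> = cinner \<psi> \<psi>"
    using Pa P \<psi> by (simp add: assoc_mult_mat_vec[symmetric] PP)
  finally have \<phi>_unit: "cinner \<phi> \<phi> = 1" using \<psi>_unit by simp
  have "(adj P * D * P) *\<^sub>v \<psi> = (adj P * D) *\<^sub>v \<phi>"
    unfolding \<phi>_def by (rule assoc_mult_mat_vec[OF mult_carrier_mat[OF Pa D] P \<psi>])
  also have "\<dots> = adj P *\<^sub>v (D *\<^sub>v \<phi>)" by (rule assoc_mult_mat_vec[OF Pa D \<phi>])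
  finally have "(adj P * D * P) *\<^sub>v \<psi> = adj P *\<^sub>v (D *\<^sub>v \<phi>)" .
  then have "z = cinner \<phi> (D *\<^sub>v \<phi>)"
    using z D P \<psi> \<phi> by (simp add: \<phi>_def cinner_mult_mat_vec)
  then show "z \<in> fov D" using \<phi> \<phi>_unit D by (auto simp: fov_def)
qed

lemma hermitian_congruence:
  assumes H: "H \<in> carrier_mat n n" and P: "P \<in> carrier_mat n m" and herm: "adj H = H"
  shows "adj (adj P * H * P) = adj P * H * P"
proof -
  have Pa: "adj P \<in> carrier_mat m n" using P by (rule adj_carrier)
  have "adj (adj P * H * P) = adj P * (H * P)"
    using adj_mult[OF mult_carrier_mat[OF Pa H] P] adj_mult[OF Pa H] herm by simp
  also have "\<dots> = adj P * H * P" using assoc_mult_mat[OF Pa H P] by simp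
  finally show ?thesis .
qed

text \<open>G plays the role of the fine grid Gamma_5 and Gc that of the coarse Gamma_5^c;
  adj (G * P) is then the Petrov-Galerkin restriction R.\<close>
context
  fixes G D P Gc :: "complex mat" and n m :: nat
  assumes G: "G \<in> carrier_mat n n" and D: "D \<in> carrier_mat n n"
    and P: "P \<in> carrier_mat n m" and Gc: "Gc \<in> carrier_mat m m"
    and Gc_herm: "adj Gc = Gc" and Gc_square: "Gc * Gc = 1\<^sub>m m"
    and G_P: "G * P = P * Gc"
begin

lemma adj_mult_eq_coarse: "adj (G * P) = Gc * adj P"
  using adj_mult[OF P Gc] by (simp add: G_P Gc_herm)

lemma petrov_galerkin_eq: "adj (G * P) * D * P = Gc * (adj P * D * P)"
proof -
  have Pa: "adj P \<in> carrier_mat m n" using P by (rule adj_carrier)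
  have "Gc * adj P * D * P = Gc * (adj P * D) * P" using assoc_mult_mat[OF Gc Pa D] by simp
  also have "\<dots> = Gc * (adj P * D * P)" using assoc_mult_mat[OF Gc mult_carrier_mat[OF Pa D] P] .
  finally show ?thesis by (simp add: adj_mult_eq_coarse)
qed

lemma galerkin_eq_petrov_galerkin: "adj P * D * P = Gc * (adj (G * P) * D * P)"
proof -
  have C: "adj P * D * P \<in> carrier_mat m m" using D P by (rule congruence_carrier)
  have "Gc * (Gc * (adj P * D * P)) = Gc * Gc * (adj P * D * P)"
    using assoc_mult_mat[OF Gc Gc C] by simp
  then show ?thesis using C by (simp add: petrov_galerkin_eq Gc_square left_mult_one_mat)
qed

lemma coarse_correction_eq:
  assumes Ginv: "Ginv \<in> carrier_mat m m" and Minv: "Minv \<in> carrier_mat m m"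
    and Ginv_inv: "Ginv * (adj P * D * P) = 1\<^sub>m m"
    and Minv_inv: "(adj (G * P) * D * P) * Minv = 1\<^sub>m m"
  shows "P * Ginv * adj P = P * Minv * adj (G * P)"
proof -
  let ?C = "adj P * D * P" and ?M = "adj (G * P) * D * P"
  have C: "?C \<in> carrier_mat m m" using D P by (rule congruence_carrier)
  have M: "?M \<in> carrier_mat m m" unfolding petrov_galerkin_eq using Gc C by (rule mult_carrier_mat)
  have MG: "Minv * Gc \<in> carrier_mat m m" using Minv Gc by (rule mult_carrier_mat)
  have "?C * (Minv * Gc) = Gc * ?M * (Minv * Gc)"
    using galerkin_eq_petrov_galerkin by simp
  also have "\<dots> = Gc * ((?M * Minv) * Gc)"
    using assoc_mult_mat[OF Gc M MG] assoc_mult_mat[OF M Minv Gc] by simp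
  also have "\<dots> = 1\<^sub>m m" using Gc by (simp add: Minv_inv Gc_square)
  finally have right_inv: "?C * (Minv * Gc) = 1\<^sub>m m" .
  have "Ginv = Ginv * (?C * (Minv * Gc))" using Ginv by (simp add: right_inv)
  also have "\<dots> = (Ginv * ?C) * (Minv * Gc)" using assoc_mult_mat[OF Ginv C MG] by simp
  also have "\<dots> = Minv * Gc" using MG by (simp add: Ginv_inv left_mult_one_mat)
  finally have "Ginv = Minv * Gc" .
  then have "P * Ginv * adj P = P * Minv * Gc * adj P"
    using assoc_mult_mat[OF P Minv Gc] by simp
  also have "\<dots> = P * Minv * adj (G * P)"
    using assoc_mult_mat[OF mult_carrier_mat[OF P Minv] Gc adj_carrier[OF P]]
    by (simp add: adj_mult_eq_coarse)
  finally show ?thesis .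
qed

lemma petrov_galerkin_hermitian:
  assumes G_herm: "adj G = G" and GD_herm: "adj (G * D) = G * D"
  shows "adj (adj (G * P) * D * P) = adj (G * P) * D * P"
proof -
  have Pa: "adj P \<in> carrier_mat m n" using P by (rule adj_carrier)
  have "adj (G * P) * D * P = adj P * (G * D) * P"
    using adj_mult[OF G P] assoc_mult_mat[OF Pa G D] by (simp add: G_herm)
  then show ?thesis
    using hermitian_congruence[OF mult_carrier_mat[OF G D] P GD_herm] by simp
qed

lemma galerkin_gamma5_hermitian:
  assumes "adj G = G" "adj (G * D) = G * D"
  shows "adj (Gc * (adj P * D * P)) = Gc * (adj P * D * P)"
  using petrov_galerkin_hermitian[OF assms] by (simp add: petrov_galerkin_eq)

end

section \<open>Gamma matrices\<close>

definition chirality :: "nat \<Rightarrow> complex" where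
  "chirality s = (if s < 2 then 1 else -1)"

lemma chirality_square [simp]: "chirality s * chirality s = 1"
  by (simp add: chirality_def)

lemma cnj_chirality [simp]: "cnj (chirality s) = chirality s"
  by (simp add: chirality_def)

lemma sum_mult_delta_right:
  "b < (n::nat) \<Longrightarrow> (\<Sum>i = 0..<n. f i * (if i = b then c i else 0)) = (f b * c b :: 'a :: semiring_0)"
  by (simp add: if_distrib[of "\<lambda>x. _ * x"] cong: if_cong)

lemma sum_delta_mult_left:
  "b < (n::nat) \<Longrightarrow> (\<Sum>i = 0..<n. (if b = i then c i else 0) * f i) = (c b * f b :: 'a :: semiring_0)"
  by (simp add: if_distrib[of "\<lambda>x. x * _"] cong: if_cong)

lemma smult_smult_mat: "a \<cdot>\<^sub>m (b \<cdot>\<^sub>m A) = (a * b :: 'a :: comm_ring_1) \<cdot>\<^sub>m A"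
  by (rule eq_matI) (simp_all add: mult.assoc)

lemma commute_up_to_scalar_mult:
  assumes A: "A \<in> carrier_mat n n" and B: "B \<in> carrier_mat n n" and C: "C \<in> carrier_mat n n"
    and AB: "A * B = k \<cdot>\<^sub>m (B * A)" and AC: "A * C = l \<cdot>\<^sub>m (C * A)"
  shows "A * (B * C) = (k * l :: 'a :: comm_ring_1) \<cdot>\<^sub>m ((B * C) * A)"
proof -
  have "A * (B * C) = k \<cdot>\<^sub>m ((B * A) * C)"
    using assoc_mult_mat[OF A B C] mult_smult_assoc_mat[OF mult_carrier_mat[OF B A] C] AB by simp
  also have "(B * A) * C = l \<cdot>\<^sub>m (B * (C * A))"
    using assoc_mult_mat[OF B A C] mult_smult_distrib[OF B mult_carrier_mat[OF C A]] AC by simp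
  also have "B * (C * A) = (B * C) * A" using B C A by simp
  finally show ?thesis by (simp add: smult_smult_mat)
qed

context
  fixes \<gamma> :: "nat \<Rightarrow> complex mat"
  assumes gamma: "gamma_matrices \<gamma>"
begin

lemma gamma_carrier: "\<mu> < 4 \<Longrightarrow> \<gamma> \<mu> \<in> carrier_mat 4 4"
  using gamma by (simp add: gamma_matrices_def)

lemma cnj_gamma_index:
  assumes "\<mu> < 4" "a < 4" "b < 4"
  shows "cnj (\<gamma> \<mu> $$ (b, a)) = \<gamma> \<mu> $$ (a, b)"
proof -
  have "adj (\<gamma> \<mu>) $$ (a, b) = \<gamma> \<mu> $$ (a, b)"
    using gamma assms by (simp add: gamma_matrices_def)
  then show ?thesis using gamma_carrier[OF assms(1)] assms by simp
qed

lemma gamma_mult_commute_sign: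
  assumes "\<mu> < 4" "\<nu> < 4"
  shows "\<gamma> \<mu> * \<gamma> \<nu> = (if \<mu> = \<nu> then 1 else -1) \<cdot>\<^sub>m (\<gamma> \<nu> * \<gamma> \<mu>)"
proof (cases "\<mu> = \<nu>")
  case True
  then show ?thesis by (intro eq_matI) simp_all
next
  case False
  have anti: "\<gamma> \<mu> * \<gamma> \<nu> + \<gamma> \<nu> * \<gamma> \<mu> = 0\<^sub>m 4 4"
    using gamma assms False by (simp add: gamma_matrices_def)
  have c: "\<gamma> \<mu> * \<gamma> \<nu> \<in> carrier_mat 4 4" "\<gamma> \<nu> * \<gamma> \<mu> \<in> carrier_mat 4 4"
    using mult_carrier_mat[OF gamma_carrier[OF assms(1)] gamma_carrier[OF assms(2)]]
      mult_carrier_mat[OF gamma_carrier[OF assms(2)] gamma_carrier[OF assms(1)]] by auto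
  show ?thesis
  proof (rule eq_matI)
    fix i j assume "i < dim_row ((if \<mu> = \<nu> then 1 else -1) \<cdot>\<^sub>m (\<gamma> \<nu> * \<gamma> \<mu>))"
      "j < dim_col ((if \<mu> = \<nu> then 1 else -1) \<cdot>\<^sub>m (\<gamma> \<nu> * \<gamma> \<mu>))"
    then have ij: "i < 4" "j < 4" using c by auto
    then have "(\<gamma> \<mu> * \<gamma> \<nu>) $$ (i, j) + (\<gamma> \<nu> * \<gamma> \<mu>) $$ (i, j) = 0"
      using arg_cong[OF anti, of "\<lambda>M. M $$ (i, j)"] c by (subst (asm) index_add_mat(1)) auto
    moreover have "dim_row (\<gamma> \<nu> * \<gamma> \<mu>) = 4" "dim_col (\<gamma> \<nu> * \<gamma> \<mu>) = 4" using c(2) by auto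
    ultimately show "(\<gamma> \<mu> * \<gamma> \<nu>) $$ (i, j) = ((if \<mu> = \<nu> then 1 else -1) \<cdot>\<^sub>m (\<gamma> \<nu> * \<gamma> \<mu>)) $$ (i, j)"
      using ij False by (simp add: eq_neg_iff_add_eq_0)
  qed (use gamma_carrier[OF assms(1)] gamma_carrier[OF assms(2)] in simp_all)
qed

lemma gamma_gamma5_anticommute:
  assumes "\<mu> < 4"
  shows "\<gamma> \<mu> * (\<gamma> 0 * \<gamma> 1 * \<gamma> 2 * \<gamma> 3) = (-1) \<cdot>\<^sub>m ((\<gamma> 0 * \<gamma> 1 * \<gamma> 2 * \<gamma> 3) * \<gamma> \<mu>)"
proof -
  define k where "k \<nu> = (if \<mu> = \<nu> then 1 else -1 :: complex)" for \<nu>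
  have c: "\<gamma> 0 \<in> carrier_mat 4 4" "\<gamma> 1 \<in> carrier_mat 4 4" "\<gamma> 2 \<in> carrier_mat 4 4"
    "\<gamma> 3 \<in> carrier_mat 4 4" "\<gamma> \<mu> \<in> carrier_mat 4 4"
    using gamma_carrier assms by auto
  have r: "\<gamma> \<mu> * \<gamma> \<nu> = k \<nu> \<cdot>\<^sub>m (\<gamma> \<nu> * \<gamma> \<mu>)" if "\<nu> < 4" for \<nu>
    using gamma_mult_commute_sign[OF assms that] by (simp add: k_def)
  have c01: "\<gamma> 0 * \<gamma> 1 \<in> carrier_mat 4 4" and c012: "\<gamma> 0 * \<gamma> 1 * \<gamma> 2 \<in> carrier_mat 4 4"
    using c by auto
  have "\<gamma> \<mu> * (\<gamma> 0 * \<gamma> 1) = (k 0 * k 1) \<cdot>\<^sub>m ((\<gamma> 0 * \<gamma> 1) * \<gamma> \<mu>)"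
    by (rule commute_up_to_scalar_mult[OF c(5) c(1) c(2) r r]) simp_all
  then have "\<gamma> \<mu> * (\<gamma> 0 * \<gamma> 1 * \<gamma> 2) = (k 0 * k 1 * k 2) \<cdot>\<^sub>m ((\<gamma> 0 * \<gamma> 1 * \<gamma> 2) * \<gamma> \<mu>)"
    by (rule commute_up_to_scalar_mult[OF c(5) c01 c(3) _ r]) simp
  then have "\<gamma> \<mu> * (\<gamma> 0 * \<gamma> 1 * \<gamma> 2 * \<gamma> 3)
      = (k 0 * k 1 * k 2 * k 3) \<cdot>\<^sub>m ((\<gamma> 0 * \<gamma> 1 * \<gamma> 2 * \<gamma> 3) * \<gamma> \<mu>)"
    by (rule commute_up_to_scalar_mult[OF c(5) c012 c(4) _ r]) simp
  moreover have "k 0 * k 1 * k 2 * k 3 = -1"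
  proof -
    from assms consider "\<mu> = 0" | "\<mu> = 1" | "\<mu> = 2" | "\<mu> = 3" by linarith
    then show ?thesis by cases (simp_all add: k_def)
  qed
  ultimately show ?thesis by simp
qed

text \<open>Since gamma_5 = diag(1,1,-1,-1) anticommutes with gamma_mu, the latter only couples
  spins of opposite chirality.\<close>
lemma chirality_gamma_index:
  assumes "\<mu> < 4" "a < 4" "b < 4"
  shows "chirality a * chirality b * \<gamma> \<mu> $$ (a, b) = - \<gamma> \<mu> $$ (a, b)"
proof -
  have g5: "\<gamma> 0 * \<gamma> 1 * \<gamma> 2 * \<gamma> 3 = gamma5_diag" using gamma by (simp add: gamma_matrices_def)
  have c: "\<gamma> \<mu> \<in> carrier_mat 4 4" using gamma_carrier assms by auto
  have "(\<gamma> \<mu> * gamma5_diag) $$ (a, b) = ((-1) \<cdot>\<^sub>m (gamma5_diag * \<gamma> \<mu>)) $$ (a, b)"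
    using gamma_gamma5_anticommute[OF assms(1)] g5 by simp
  moreover have "(\<gamma> \<mu> * gamma5_diag) $$ (a, b) = \<gamma> \<mu> $$ (a, b) * chirality b"
    using c assms
    by (simp add: gamma5_diag_def scalar_prod_def row_def col_def sum_mult_delta_right chirality_def)
  moreover have "(gamma5_diag * \<gamma> \<mu>) $$ (a, b) = chirality a * \<gamma> \<mu> $$ (a, b)"
    using c assms
    by (simp add: gamma5_diag_def scalar_prod_def row_def col_def sum_delta_mult_left chirality_def)
  ultimately have "\<gamma> \<mu> $$ (a, b) * chirality b = - (chirality a * \<gamma> \<mu> $$ (a, b))"
    using c assms by (simp add: gamma5_diag_def)
  then show ?thesis by (cases "a < 2"; cases "b < 2") (simp_all add: chirality_def)
qed

lemma chirality_cnj_gamma_mult_index: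
  assumes "a < 4" "b < 4" "\<mu> < 4" "\<nu> < 4"
  shows "chirality a * chirality b * cnj ((\<gamma> \<mu> * \<gamma> \<nu>) $$ (b, a)) = (\<gamma> \<nu> * \<gamma> \<mu>) $$ (a, b)"
proof -
  have c: "\<gamma> \<mu> \<in> carrier_mat 4 4" "\<gamma> \<nu> \<in> carrier_mat 4 4" using gamma_carrier assms by auto
  have "chirality a * chirality b * cnj ((\<gamma> \<mu> * \<gamma> \<nu>) $$ (b, a))
      = (\<Sum>k = 0..<4. chirality a * chirality b * (cnj (\<gamma> \<mu> $$ (b, k)) * cnj (\<gamma> \<nu> $$ (k, a))))"
    using c assms by (simp add: scalar_prod_def row_def col_def sum_distrib_left)
  also have "\<dots> = (\<Sum>k = 0..<4. \<gamma> \<nu> $$ (a, k) * \<gamma> \<mu> $$ (k, b))"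
  proof (rule sum.cong)
    fix k assume "k \<in> {0..<4::nat}"
    then have k: "k < 4" by simp
    have "chirality a * chirality b * (cnj (\<gamma> \<mu> $$ (b, k)) * cnj (\<gamma> \<nu> $$ (k, a)))
       = (chirality a * chirality k * \<gamma> \<nu> $$ (a, k)) * (chirality k * chirality b * \<gamma> \<mu> $$ (k, b))"
      using cnj_gamma_index[OF assms(3) k assms(2)] cnj_gamma_index[OF assms(4) assms(1) k]
      by (simp add: algebra_simps)
    then show "chirality a * chirality b * (cnj (\<gamma> \<mu> $$ (b, k)) * cnj (\<gamma> \<nu> $$ (k, a)))
       = \<gamma> \<nu> $$ (a, k) * \<gamma> \<mu> $$ (k, b)"
      using chirality_gamma_index[OF assms(4) assms(1) k] chirality_gamma_index[OF assms(3) k assms(2)]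
      by simp
  qed simp
  also have "\<dots> = (\<gamma> \<nu> * \<gamma> \<mu>) $$ (a, b)"
    using c assms by (simp add: scalar_prod_def row_def col_def)
  finally show ?thesis .
qed

end

section \<open>The clover-improved Wilson Dirac operator\<close>

locale lattice_gauge_field = periodic_lattice Nt Ns for Nt Ns +
  fixes U :: "nat \<Rightarrow> nat \<Rightarrow> complex mat"
  assumes links_SU3: "\<forall>x < nsites Nt Ns. \<forall>\<mu> < 4. SU3 (U x \<mu>)"
begin

abbreviation fw :: "nat \<Rightarrow> nat \<Rightarrow> nat" where "fw \<mu> x \<equiv> shift Nt Ns \<mu> 1 x"
abbreviation bw :: "nat \<Rightarrow> nat \<Rightarrow> nat" where "bw \<mu> x \<equiv> shift Nt Ns \<mu> (-1) x"

lemma link_carrier: "x < nsites Nt Ns \<Longrightarrow> \<mu> < 4 \<Longrightarrow> U x \<mu> \<in> carrier_mat 3 3"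
  using links_SU3 by (simp add: SU3_def)

lemma adj_link_carrier: "x < nsites Nt Ns \<Longrightarrow> \<mu> < 4 \<Longrightarrow> adj (U x \<mu>) \<in> carrier_mat 3 3"
  using link_carrier adj_carrier by blast

lemma bw_fw: "x < nsites Nt Ns \<Longrightarrow> \<mu> < 4 \<Longrightarrow> bw \<mu> (fw \<mu> x) = x"
  using shift_neg_shift[of x \<mu> 1] by simp

lemma fw_bw: "x < nsites Nt Ns \<Longrightarrow> \<mu> < 4 \<Longrightarrow> fw \<mu> (bw \<mu> x) = x"
  using shift_neg_shift[of x \<mu> "-1"] by simp

lemma eq_fw_iff: "x < nsites Nt Ns \<Longrightarrow> y < nsites Nt Ns \<Longrightarrow> \<mu> < 4 \<Longrightarrow> y = fw \<mu> x \<longleftrightarrow> x = bw \<mu> y"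
  using bw_fw fw_bw by metis

lemma bw_fw_commute:
  assumes x: "x < nsites Nt Ns" and \<mu>: "\<mu> < 4" and \<nu>: "\<nu> < 4"
  shows "bw \<mu> (fw \<nu> x) = fw \<nu> (bw \<mu> x)"
  using shift_commute[OF x \<mu> \<nu>, of "-1" 1] by (cases "\<mu> = \<nu>") (simp_all add: bw_fw fw_bw x \<mu> \<nu>)

lemma bw_bw_commute:
  assumes "x < nsites Nt Ns" "\<mu> < 4" "\<nu> < 4"
  shows "bw \<mu> (bw \<nu> x) = bw \<nu> (bw \<mu> x)"
  using shift_commute[OF assms, of "-1" "-1"] by (cases "\<mu> = \<nu>") simp_all

lemma mult4_carrier:
  "A \<in> carrier_mat n n \<Longrightarrow> B \<in> carrier_mat n n \<Longrightarrow> C \<in> carrier_mat n n \<Longrightarrow> D \<in> carrier_mat n n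
    \<Longrightarrow> A * B * C * D \<in> carrier_mat n n"
  by (intro mult_carrier_mat)

lemma plaquette_carrier:
  assumes "x < nsites Nt Ns" "\<mu> < 4" "\<nu> < 4"
  shows "Qpl Nt Ns U \<mu> \<nu> x \<in> carrier_mat 3 3"
  unfolding Qpl_def Let_def
  by (intro add_carrier_mat mult4_carrier; intro link_carrier adj_link_carrier shift_less assms)+

text \<open>Adjoining reverses the orientation of each of the four plaquettes; the two plaquettes
  that do not start at x match up only because the shifts in different directions commute.\<close>
lemma adj_plaquette:
  assumes x: "x < nsites Nt Ns" and \<mu>: "\<mu> < 4" and \<nu>: "\<nu> < 4"
  shows "adj (Qpl Nt Ns U \<mu> \<nu> x) = Qpl Nt Ns U \<nu> \<mu> x"
proof -
  note sites = shift_less[OF _ \<mu>] shift_less[OF _ \<nu>]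
  define A1 where "A1 = U x \<mu> * U (fw \<mu> x) \<nu> * adj (U (fw \<nu> x) \<mu>) * adj (U x \<nu>)"
  define A2 where "A2 = U x \<nu> * adj (U (bw \<mu> (fw \<nu> x)) \<mu>) * adj (U (bw \<mu> x) \<nu>) * U (bw \<mu> x) \<mu>"
  define A3 where "A3 = adj (U (bw \<mu> x) \<mu>) * adj (U (bw \<nu> (bw \<mu> x)) \<nu>) * U (bw \<nu> (bw \<mu> x)) \<mu> * U (bw \<nu> x) \<nu>"
  define A4 where "A4 = adj (U (bw \<nu> x) \<nu>) * U (bw \<nu> x) \<mu> * U (fw \<mu> (bw \<nu> x)) \<nu> * adj (U x \<mu>)"
  define B1 where "B1 = U x \<nu> * U (fw \<nu> x) \<mu> * adj (U (fw \<mu> x) \<nu>) * adj (U x \<mu>)"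
  define B2 where "B2 = U x \<mu> * adj (U (bw \<nu> (fw \<mu> x)) \<nu>) * adj (U (bw \<nu> x) \<mu>) * U (bw \<nu> x) \<nu>"
  define B3 where "B3 = adj (U (bw \<nu> x) \<nu>) * adj (U (bw \<mu> (bw \<nu> x)) \<mu>) * U (bw \<mu> (bw \<nu> x)) \<nu> * U (bw \<mu> x) \<mu>"
  define B4 where "B4 = adj (U (bw \<mu> x) \<mu>) * U (bw \<mu> x) \<nu> * U (fw \<nu> (bw \<mu> x)) \<mu> * adj (U x \<nu>)"
  have A: "A1 \<in> carrier_mat 3 3" "A2 \<in> carrier_mat 3 3" "A3 \<in> carrier_mat 3 3" "A4 \<in> carrier_mat 3 3"
    unfolding A1_def A2_def A3_def A4_def
    by (intro mult4_carrier; intro link_carrier adj_link_carrier sites x \<mu> \<nu>)+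
  have B: "B1 \<in> carrier_mat 3 3" "B2 \<in> carrier_mat 3 3" "B3 \<in> carrier_mat 3 3" "B4 \<in> carrier_mat 3 3"
    unfolding B1_def B2_def B3_def B4_def
    by (intro mult4_carrier; intro link_carrier adj_link_carrier sites x \<mu> \<nu>)+
  have Q: "Qpl Nt Ns U \<mu> \<nu> x = A1 + A2 + A3 + A4" "Qpl Nt Ns U \<nu> \<mu> x = B1 + B2 + B3 + B4"
    unfolding Qpl_def Let_def A1_def A2_def A3_def A4_def B1_def B2_def B3_def B4_def by simp_all
  note links = link_carrier adj_link_carrier sites x \<mu> \<nu>
  have "adj A1 = B1" unfolding A1_def B1_def by (subst adj_mult4[where n = 3]; (intro links)?) simp
  moreover have "adj A2 = B4" unfolding A2_def B4_def bw_fw_commute[OF x \<mu> \<nu>]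
    by (subst adj_mult4[where n = 3]; (intro links)?) simp
  moreover have "adj A3 = B3" unfolding A3_def B3_def bw_bw_commute[OF x \<nu> \<mu>]
    by (subst adj_mult4[where n = 3]; (intro links)?) simp
  moreover have "adj A4 = B2" unfolding A4_def B2_def bw_fw_commute[OF x \<nu> \<mu>]
    by (subst adj_mult4[where n = 3]; (intro links)?) simp
  ultimately have "adj (Qpl Nt Ns U \<mu> \<nu> x) = B1 + B4 + B3 + B2"
    unfolding Q using A by (metis adj_add add_carrier_mat)
  also have "\<dots> = Qpl Nt Ns U \<nu> \<mu> x"
    unfolding Q
  proof (rule eq_matI)
    fix i j assume "i < dim_row (B1 + B2 + B3 + B4)" "j < dim_col (B1 + B2 + B3 + B4)"
    then have "i < 3" "j < 3" using B by auto
    then show "(B1 + B4 + B3 + B2) $$ (i, j) = (B1 + B2 + B3 + B4) $$ (i, j)"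
      using B by (simp add: ac_simps)
  qed (use B in simp_all)
  finally show ?thesis .
qed

end

locale wilson_clover = lattice_gauge_field Nt Ns U for Nt Ns U +
  fixes \<gamma> :: "nat \<Rightarrow> complex mat" and a m0 csw :: real
  assumes gamma: "gamma_matrices \<gamma>"
begin

definition clover_field :: "nat \<Rightarrow> nat \<Rightarrow> nat \<Rightarrow> complex mat" where
  "clover_field \<mu> \<nu> x = Qpl Nt Ns U \<mu> \<nu> x - Qpl Nt Ns U \<nu> \<mu> x"

lemma cnj_clover_field_index:
  assumes "x < nsites Nt Ns" "\<mu> < 4" "\<nu> < 4" "ci < 3" "cj < 3"
  shows "cnj (clover_field \<mu> \<nu> x $$ (cj, ci)) = clover_field \<nu> \<mu> x $$ (ci, cj)"
proof -
  have Q: "Qpl Nt Ns U \<mu> \<nu> x \<in> carrier_mat 3 3" "Qpl Nt Ns U \<nu> \<mu> x \<in> carrier_mat 3 3"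
    using plaquette_carrier assms by auto
  have "adj (clover_field \<mu> \<nu> x) = clover_field \<nu> \<mu> x"
    unfolding clover_field_def adj_minus[OF Q] adj_plaquette[OF assms(1-3)] adj_plaquette[OF assms(1,3,2)] ..
  moreover have "clover_field \<mu> \<nu> x \<in> carrier_mat 3 3"
    unfolding clover_field_def using Q(2) by (rule minus_carrier_mat)
  ultimately show ?thesis using assms adj_index[of ci "clover_field \<mu> \<nu> x" cj] by simp
qed

definition clover_term :: "nat \<Rightarrow> nat \<Rightarrow> nat \<Rightarrow> nat \<Rightarrow> nat \<Rightarrow> nat \<Rightarrow> complex" where
  "clover_term x y si sj ci cj =
    (if x = y then
        (if si = sj \<and> ci = cj then complex_of_real ((m0 + 4) / a) else 0)
        - complex_of_real (csw / (32 * a)) *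
            (\<Sum>\<mu><4. \<Sum>\<nu><4. (\<gamma> \<mu> * \<gamma> \<nu>) $$ (si, sj) * clover_field \<mu> \<nu> x $$ (ci, cj))
     else 0)"

definition hop_forward :: "nat \<Rightarrow> nat \<Rightarrow> nat \<Rightarrow> nat \<Rightarrow> nat \<Rightarrow> nat \<Rightarrow> complex" where
  "hop_forward x y si sj ci cj = complex_of_real (1 / (2 * a)) *
    (\<Sum>\<mu><4. if y = fw \<mu> x then (1\<^sub>m 4 - \<gamma> \<mu>) $$ (si, sj) * U x \<mu> $$ (ci, cj) else 0)"

definition hop_backward :: "nat \<Rightarrow> nat \<Rightarrow> nat \<Rightarrow> nat \<Rightarrow> nat \<Rightarrow> nat \<Rightarrow> complex" where
  "hop_backward x y si sj ci cj = complex_of_real (1 / (2 * a)) *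
    (\<Sum>\<mu><4. if y = bw \<mu> x then (1\<^sub>m 4 + \<gamma> \<mu>) $$ (si, sj) * adj (U (bw \<mu> x) \<mu>) $$ (ci, cj) else 0)"

lemma dirac_index:
  assumes "i < 12 * nsites Nt Ns" "j < 12 * nsites Nt Ns"
  shows "dirac Nt Ns a m0 csw \<gamma> U $$ (i, j) =
     clover_term (site_of i) (site_of j) (spin_of i) (spin_of j) (color_of i) (color_of j)
   - hop_forward (site_of i) (site_of j) (spin_of i) (spin_of j) (color_of i) (color_of j)
   - hop_backward (site_of i) (site_of j) (spin_of i) (spin_of j) (color_of i) (color_of j)"
  using assms
  by (simp add: dirac_def clover_term_def clover_field_def hop_forward_def hop_backward_def Let_def)

lemma hop_forward_gamma5_adj:
  assumes x: "x < nsites Nt Ns" and y: "y < nsites Nt Ns" and si: "si < 4" and sj: "sj < 4"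
    and "ci < 3" "cj < 3"
  shows "hop_forward x y si sj ci cj = chirality si * chirality sj * cnj (hop_backward y x sj si cj ci)"
proof -
  have "chirality si * chirality sj * cnj (hop_backward y x sj si cj ci) = complex_of_real (1 / (2 * a)) *
     (\<Sum>\<mu><4. chirality si * chirality sj * cnj (if x = bw \<mu> y
        then (1\<^sub>m 4 + \<gamma> \<mu>) $$ (sj, si) * adj (U (bw \<mu> y) \<mu>) $$ (cj, ci) else 0))"
    by (simp add: hop_backward_def sum_distrib_left algebra_simps)
  also have "\<dots> = hop_forward x y si sj ci cj"
    unfolding hop_forward_def
  proof (intro arg_cong[where f = "\<lambda>t. _ * t"] sum.cong refl)
    fix \<mu> assume "\<mu> \<in> {..<4::nat}"
    then have \<mu>: "\<mu> < 4" by simp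
    show "chirality si * chirality sj * cnj (if x = bw \<mu> y
        then (1\<^sub>m 4 + \<gamma> \<mu>) $$ (sj, si) * adj (U (bw \<mu> y) \<mu>) $$ (cj, ci) else 0)
      = (if y = fw \<mu> x then (1\<^sub>m 4 - \<gamma> \<mu>) $$ (si, sj) * U x \<mu> $$ (ci, cj) else 0)"
    proof (cases "y = fw \<mu> x")
      case True
      then have "x = bw \<mu> y" using eq_fw_iff[OF x y \<mu>] by simp
      moreover have "cnj (adj (U x \<mu>) $$ (cj, ci)) = U x \<mu> $$ (ci, cj)"
        using link_carrier[OF x \<mu>] assms by simp
      moreover have "chirality si * chirality sj * cnj ((1\<^sub>m 4 + \<gamma> \<mu>) $$ (sj, si))
          = (1\<^sub>m 4 - \<gamma> \<mu>) $$ (si, sj)"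
        using gamma_carrier[OF gamma \<mu>] cnj_gamma_index[OF gamma \<mu> si sj]
          chirality_gamma_index[OF gamma \<mu> si sj] si sj
        by (auto simp: algebra_simps)
      ultimately show ?thesis using True by (simp add: mult.assoc)
    next
      case False
      then show ?thesis using eq_fw_iff[OF x y \<mu>] by simp
    qed
  qed
  finally show ?thesis ..
qed

lemma hop_backward_gamma5_adj:
  assumes "x < nsites Nt Ns" "y < nsites Nt Ns" "si < 4" "sj < 4" "ci < 3" "cj < 3"
  shows "hop_backward x y si sj ci cj = chirality si * chirality sj * cnj (hop_forward y x sj si cj ci)"
proof -
  have "chirality si * chirality sj * cnj (hop_forward y x sj si cj ci)
      = (chirality si * chirality si) * (chirality sj * chirality sj) * hop_backward x y si sj ci cj"
    using hop_forward_gamma5_adj[OF assms(2,1,4,3,6,5)] by (simp add: algebra_simps)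
  then show ?thesis by simp
qed

lemma clover_term_gamma5_adj:
  assumes x: "x < nsites Nt Ns" and "si < 4" "sj < 4" "ci < 3" "cj < 3"
  shows "clover_term x y si sj ci cj = chirality si * chirality sj * cnj (clover_term y x sj si cj ci)"
proof (cases "x = y")
  case False
  then show ?thesis by (simp add: clover_term_def)
next
  case True
  define S where "S si sj ci cj =
    (\<Sum>\<mu><4. \<Sum>\<nu><4. (\<gamma> \<mu> * \<gamma> \<nu>) $$ (si, sj) * clover_field \<mu> \<nu> x $$ (ci, cj))" for si sj ci cj
  have "chirality si * chirality sj * cnj (S sj si cj ci)
      = (\<Sum>\<mu><4. \<Sum>\<nu><4. (chirality si * chirality sj * cnj ((\<gamma> \<mu> * \<gamma> \<nu>) $$ (sj, si)))
            * cnj (clover_field \<mu> \<nu> x $$ (cj, ci)))"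
    by (simp add: S_def sum_distrib_left algebra_simps)
  also have "\<dots> = (\<Sum>\<mu><4. \<Sum>\<nu><4. (\<gamma> \<nu> * \<gamma> \<mu>) $$ (si, sj) * clover_field \<nu> \<mu> x $$ (ci, cj))"
    using chirality_cnj_gamma_mult_index[OF gamma assms(2,3)] cnj_clover_field_index[OF x _ _ assms(4,5)]
    by simp
  also have "\<dots> = S si sj ci cj" unfolding S_def by (rule sum.swap)
  finally have S_adj: "chirality si * chirality sj * cnj (S sj si cj ci) = S si sj ci cj" .
  have diag: "clover_term x x p q r t = (if p = q \<and> r = t then complex_of_real ((m0 + 4) / a) else 0)
      - complex_of_real (csw / (32 * a)) * S p q r t" for p q r t
    by (simp add: clover_term_def S_def)
  have "chirality si * chirality sj * cnj (if sj = si \<and> cj = ci then complex_of_real ((m0 + 4) / a) else 0)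
      = (if si = sj \<and> ci = cj then complex_of_real ((m0 + 4) / a) else 0)"
    by auto
  then show ?thesis
    unfolding True[symmetric] diag using S_adj by (simp add: right_diff_distrib mult.left_commute)
qed

lemma dirac_carrier: "dirac Nt Ns a m0 csw \<gamma> U \<in> carrier_mat (12 * nsites Nt Ns) (12 * nsites Nt Ns)"
  by (simp add: dirac_def)

lemma dirac_gamma5_adj_index:
  assumes "i < 12 * nsites Nt Ns" "j < 12 * nsites Nt Ns"
  shows "dirac Nt Ns a m0 csw \<gamma> U $$ (i, j)
       = chirality (spin_of i) * chirality (spin_of j) * cnj (dirac Nt Ns a m0 csw \<gamma> U $$ (j, i))"
proof -
  have idx: "site_of i < nsites Nt Ns" "site_of j < nsites Nt Ns" "spin_of i < 4" "spin_of j < 4"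
    "color_of i < 3" "color_of j < 3"
    using assms by (auto simp: site_of_def spin_of_def color_of_def)
  show ?thesis
    unfolding dirac_index[OF assms] dirac_index[OF assms(2,1)]
      clover_term_gamma5_adj[OF idx(1,3,4,5,6)] hop_forward_gamma5_adj[OF idx]
      hop_backward_gamma5_adj[OF idx]
    by (simp add: algebra_simps)
qed

end

definition chirality_mat :: "nat \<Rightarrow> complex mat" where
  "chirality_mat n = mat n n (\<lambda>(i, j). if i = j then chirality (spin_of i) else 0)"

lemma chirality_mat_carrier: "chirality_mat n \<in> carrier_mat n n"
  by (simp add: chirality_mat_def)

lemma adj_chirality_mat: "adj (chirality_mat n) = chirality_mat n"
  by (rule eq_matI) (simp_all add: chirality_mat_def)

lemma chirality_mat_mult_index:
  assumes "B \<in> carrier_mat n m" "i < n" "j < m"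
  shows "(chirality_mat n * B) $$ (i, j) = chirality (spin_of i) * B $$ (i, j)"
  using assms sum_delta_mult_left[of i n "\<lambda>_. chirality (spin_of i)" "\<lambda>k. B $$ (k, j)"]
  by (simp add: chirality_mat_def scalar_prod_def row_def col_def)

lemma variable_eqI:
  assumes "site_of i = site_of j" "spin_of i = spin_of j" "color_of i = color_of j"
  shows "i = j"
proof -
  have "k = 12 * site_of k + 3 * spin_of k + color_of k" for k :: nat
  proof -
    have "k mod 12 mod 3 = k mod 3" by (simp add: mod_mod_cancel)
    then have "k mod 12 = 3 * ((k mod 12) div 3) + k mod 3" by (metis div_mult_mod_eq mult.commute)
    moreover have "k = 12 * (k div 12) + k mod 12" by simp
    ultimately show ?thesis unfolding site_of_def spin_of_def color_of_def by linarith
  qed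
  then show ?thesis using assms by metis
qed

lemma Gamma5_eq_chirality_mat:
  assumes "gamma_matrices \<gamma>"
  shows "Gamma5 nL \<gamma> = chirality_mat (12 * nL)"
proof (rule eq_matI)
  fix i j assume ij: "i < dim_row (chirality_mat (12 * nL))" "j < dim_col (chirality_mat (12 * nL))"
  have g5: "\<gamma> 0 * \<gamma> 1 * \<gamma> 2 * \<gamma> 3 = gamma5_diag"
    using assms by (simp add: gamma_matrices_def)
  have "spin_of i < 4" "spin_of j < 4" by (simp_all add: spin_of_def)
  then have "(if site_of i = site_of j \<and> color_of i = color_of j
      then gamma5_diag $$ (spin_of i, spin_of j) else 0) = (if i = j then chirality (spin_of i) else 0)"
    using variable_eqI[of i j] by (auto simp: gamma5_diag_def chirality_def)
  then show "Gamma5 nL \<gamma> $$ (i, j) = chirality_mat (12 * nL) $$ (i, j)"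
    using ij unfolding Gamma5_def g5 by (simp add: chirality_mat_def)
qed (simp_all add: Gamma5_def chirality_mat_def)

lemma (in wilson_clover) gamma5_dirac_hermitian:
  defines "n \<equiv> 12 * nsites Nt Ns" and "D \<equiv> dirac Nt Ns a m0 csw \<gamma> U"
  shows "adj (chirality_mat n * D) = chirality_mat n * D"
proof (rule eq_matI)
  have D: "D \<in> carrier_mat n n" unfolding D_def n_def by (rule dirac_carrier)
  fix i j assume "i < dim_row (chirality_mat n * D)" "j < dim_col (chirality_mat n * D)"
  then have i: "i < n" and j: "j < n" using D by (simp_all add: chirality_mat_def)
  have "adj (chirality_mat n * D) $$ (i, j) = cnj ((chirality_mat n * D) $$ (j, i))"
    using D i j by (simp add: chirality_mat_def)
  also have "\<dots> = chirality (spin_of j) * cnj (D $$ (j, i))"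
    using chirality_mat_mult_index[OF D j i] by simp
  also have "\<dots> = chirality (spin_of i) * D $$ (i, j)"
    using dirac_gamma5_adj_index[OF i[unfolded n_def] j[unfolded n_def]]
    by (simp add: D_def mult.assoc[symmetric])
  also have "\<dots> = (chirality_mat n * D) $$ (i, j)"
    using D i j by (simp add: chirality_mat_mult_index)
  finally show "adj (chirality_mat n * D) $$ (i, j) = (chirality_mat n * D) $$ (i, j)" .
qed (simp_all add: chirality_mat_def dirac_def n_def D_def)

section \<open>Aggregation-based prolongation\<close>

lemma Gamma5c_carrier: "Gamma5c s A N \<in> carrier_mat (s * N) (s * N)"
  by (simp add: Gamma5c_def)

lemma adj_Gamma5c: "adj (Gamma5c s A N) = Gamma5c s A N"
  by (rule eq_matI) (simp_all add: Gamma5c_def)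

lemma Gamma5c_square: "Gamma5c s A N * Gamma5c s A N = 1\<^sub>m (s * N)"
  by (rule eq_matI) (simp_all add: Gamma5c_def scalar_prod_def row_def col_def sum_mult_delta_right)

lemma coarse_index_decomp:
  fixes p s N :: nat
  assumes "p < s * N"
  shows "p div N < s" "p mod N < N" "p = p div N * N + p mod N"
proof -
  have "N > 0" using assms by (cases N) auto
  then show "p div N < s" "p mod N < N" using assms by (simp_all add: div_less_iff_less_mult mult.commute)
  show "p = p div N * N + p mod N" by simp
qed

locale aggregation_prolongation =
  fixes n s N :: nat and A :: "nat \<Rightarrow> nat set" and v :: "nat \<Rightarrow> complex vec" and P :: "complex mat"
  assumes aggregation: "is_aggregation n s A" and compatible: "gamma5_compatible s A"
    and test_vectors: "\<forall>l < N. v l \<in> carrier_vec n"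
    and prolongation: "is_agg_prolongation n s A N v P"
begin

lemma prolongation_carrier: "P \<in> carrier_mat n (s * N)"
  using prolongation by (simp add: is_agg_prolongation_def)

text \<open>Column p of P lies in the span of the test vectors restricted to the aggregate p div N.\<close>
lemma prolongation_index_outside:
  assumes p: "p < s * N" and k: "k < n" and outside: "k \<notin> A (p div N)"
  shows "P $$ (k, p) = 0"
proof -
  define i where "i = p div N"
  define l where "l = p mod N"
  have i: "i < s" and l: "l < N" and p_eq: "p = i * N + l"
    using coarse_index_decomp[OF p] by (auto simp: i_def l_def)
  have col_p: "col P p = vec n (\<lambda>k. \<Sum>l'<N. (if l' = l then 1 else 0) * col P (i * N + l') $ k)"
    using prolongation_carrier l p_eq by (intro eq_vecI) (simp_all add: if_distrib[of "\<lambda>x. x * _"] cong: if_cong)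
  have "col P p \<in> cspan n N (\<lambda>l. col P (i * N + l))"
    unfolding cspan_def by (intro CollectI exI[where x = "\<lambda>l'. if l' = l then 1 else 0"]) (simp only: col_p simp_thms)
  also have "\<dots> = cspan n N (\<lambda>l. restr (A i) (v l))"
    using prolongation i by (simp add: is_agg_prolongation_def)
  finally obtain c where c: "col P p = vec n (\<lambda>k. \<Sum>l<N. c l * restr (A i) (v l) $ k)"
    unfolding cspan_def by blast
  have "P $$ (k, p) = col P p $ k" using prolongation_carrier p k by simp
  also have "\<dots> = (\<Sum>l<N. c l * restr (A i) (v l) $ k)" using c k by simp
  also have "\<dots> = 0"
  proof (intro sum.neutral ballI)
    fix l assume "l \<in> {..<N}"
    then have "v l \<in> carrier_vec n" using test_vectors by simp
    then show "c l * restr (A i) (v l) $ k = 0" using outside k by (simp add: i_def restr_def)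
  qed
  finally show ?thesis .
qed

lemma prolongation_columns_disjoint:
  assumes p: "p < s * N" and q: "q < s * N" and k: "k < n" and different: "p div N \<noteq> q div N"
  shows "cnj (P $$ (k, p)) * P $$ (k, q) = 0"
proof (cases "k \<in> A (p div N)")
  case True
  then have "k \<notin> A (q div N)"
    using aggregation different coarse_index_decomp(1)[OF p] coarse_index_decomp(1)[OF q]
    by (auto simp: is_aggregation_def)
  then show ?thesis using prolongation_index_outside[OF q k] by simp
next
  case False
  then show ?thesis using prolongation_index_outside[OF p k] by simp
qed

lemma prolongation_orthonormal: "adj P * P = 1\<^sub>m (s * N)"
proof (rule eq_matI)
  fix p q assume "p < dim_row (1\<^sub>m (s * N))" "q < dim_col (1\<^sub>m (s * N))"
  then have p: "p < s * N" and q: "q < s * N" by auto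
  have "(adj P * P) $$ (p, q) = (\<Sum>k<n. cnj (P $$ (k, p)) * P $$ (k, q))"
    using prolongation_carrier p q by (simp add: scalar_prod_def atLeast0LessThan)
  also have "\<dots> = 1\<^sub>m (s * N) $$ (p, q)"
  proof (cases "p div N = q div N")
    case True
    define i where "i = p div N"
    have "i < s" using coarse_index_decomp[OF p] by (simp add: i_def)
    then have "cinner (col P (i * N + p mod N)) (col P (i * N + q mod N))
        = (if p mod N = q mod N then 1 else 0)"
      using prolongation coarse_index_decomp(2)[OF p] coarse_index_decomp(2)[OF q]
      by (simp add: is_agg_prolongation_def)
    moreover have "i * N + p mod N = p" "i * N + q mod N = q"
      using coarse_index_decomp(3)[OF p] coarse_index_decomp(3)[OF q] True by (auto simp: i_def)
    moreover have "p mod N = q mod N \<longleftrightarrow> p = q"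
      using \<open>i * N + p mod N = p\<close> \<open>i * N + q mod N = q\<close> by metis
    ultimately show ?thesis
      using prolongation_carrier p q by (simp add: cinner_def)
  next
    case False
    then show ?thesis
      using prolongation_columns_disjoint[OF p q _ False] p q by (auto intro: sum.neutral)
  qed
  finally show "(adj P * P) $$ (p, q) = 1\<^sub>m (s * N) $$ (p, q)" .
qed (use prolongation_carrier in simp_all)

lemma chirality_mat_prolongation: "chirality_mat n * P = P * Gamma5c s A N"
proof (rule eq_matI)
  fix k p assume "k < dim_row (P * Gamma5c s A N)" "p < dim_col (P * Gamma5c s A N)"
  then have k: "k < n" and p: "p < s * N" using prolongation_carrier by (auto simp: Gamma5c_def)
  define g where "g = (if \<forall>k\<in>A (p div N). spin_of k \<in> {0,1} then 1 else -1 :: complex)"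
  have "(P * Gamma5c s A N) $$ (k, p) = P $$ (k, p) * g"
    using prolongation_carrier k p sum_mult_delta_right[OF p, of "\<lambda>q. P $$ (k, q)"]
    by (simp add: Gamma5c_def scalar_prod_def row_def col_def g_def)
  moreover have "chirality (spin_of k) * P $$ (k, p) = P $$ (k, p) * g"
  proof (cases "k \<in> A (p div N)")
    case False
    then show ?thesis using prolongation_index_outside[OF p k] by simp
  next
    case True
    consider "\<forall>k\<in>A (p div N). spin_of k \<in> {0,1}" | "\<forall>k\<in>A (p div N). spin_of k \<in> {2,3}"
      using compatible coarse_index_decomp(1)[OF p] by (auto simp: gamma5_compatible_def)
    then have "chirality (spin_of k) = g"
    proof cases
      case 1
      moreover from 1 True have "spin_of k \<in> {0,1}" by blast
      ultimately show ?thesis by (auto simp: g_def chirality_def)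
    next
      case 2
      with True have "spin_of k \<in> {2,3}" by blast
      then have "spin_of k \<notin> {0,1}" by auto
      with True have "g = -1" unfolding g_def by (intro if_not_P) blast
      with \<open>spin_of k \<in> {2,3}\<close> show ?thesis by (auto simp: chirality_def)
    qed
    then show ?thesis by simp
  qed
  ultimately show "(chirality_mat n * P) $$ (k, p) = (P * Gamma5c s A N) $$ (k, p)"
    using chirality_mat_mult_index[OF prolongation_carrier k p] by simp
qed (use prolongation_carrier in \<open>simp_all add: chirality_mat_def Gamma5c_def\<close>)

end

theorem lemma3p3:
  fixes Nt Ns s N :: nat and a m0 csw :: real
    and \<gamma> :: "nat \<Rightarrow> complex mat" and U :: "nat \<Rightarrow> nat \<Rightarrow> complex mat"
    and A :: "nat \<Rightarrow> nat set" and v :: "nat \<Rightarrow> complex vec" and P :: "complex mat"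
  defines "n \<equiv> 12 * nsites Nt Ns"
    and "D \<equiv> dirac Nt Ns a m0 csw \<gamma> U"
    and "G5 \<equiv> Gamma5 (nsites Nt Ns) \<gamma>"
    and "G5c \<equiv> Gamma5c s A N"
    and "R \<equiv> adj (Gamma5 (nsites Nt Ns) \<gamma> * P)"
  assumes "Nt > 0" and "Ns > 0" and "a > 0"
    and "gamma_matrices \<gamma>"
    and "\<forall>x < nsites Nt Ns. \<forall>\<mu> < 4. SU3 (U x \<mu>)"
    and "is_aggregation n s A" and "gamma5_compatible s A"
    and "\<forall>l < N. v l \<in> carrier_vec n"
    and "\<forall>i < s. lin_indep n N (\<lambda>l. restr (A i) (v l))"
    and "is_agg_prolongation n s A N v P"
  shows "adj P * D * P = G5c * (R * D * P)
     \<and> (\<forall>Ci Pi. Ci \<in> carrier_mat (s * N) (s * N) \<and> Pi \<in> carrier_mat (s * N) (s * N) \<and>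
           (adj P * D * P) * Ci = 1\<^sub>m (s * N) \<and> Ci * (adj P * D * P) = 1\<^sub>m (s * N) \<and>
           (R * D * P) * Pi = 1\<^sub>m (s * N) \<and> Pi * (R * D * P) = 1\<^sub>m (s * N) \<longrightarrow>
           1\<^sub>m n - P * Ci * adj P * D = 1\<^sub>m n - P * Pi * R * D)
     \<and> adj (R * D * P) = R * D * P
     \<and> adj (G5c * (adj P * D * P)) = G5c * (adj P * D * P)
     \<and> fov (adj P * D * P) \<subseteq> fov D"
proof -
  interpret wilson_clover Nt Ns U \<gamma> a m0 csw
    using assms by unfold_locales simp_all
  interpret aggregation_prolongation n s N A v P
    using assms by unfold_locales simp_all
  have D: "D \<in> carrier_mat n n" unfolding D_def n_def by (rule dirac_carrier)
  have R: "R = adj (chirality_mat n * P)"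
    unfolding R_def n_def Gamma5_eq_chirality_mat[OF gamma] ..
  note coarse_setting = chirality_mat_carrier D prolongation_carrier Gamma5c_carrier[of s A N]
    adj_Gamma5c Gamma5c_square chirality_mat_prolongation
  have gamma5_hermitian:
      "adj (chirality_mat n) = chirality_mat n" "adj (chirality_mat n * D) = chirality_mat n * D"
    unfolding n_def D_def by (rule adj_chirality_mat gamma5_dirac_hermitian)+
  have "1\<^sub>m n - P * Ci * adj P * D = 1\<^sub>m n - P * Pi * R * D"
    if "Ci \<in> carrier_mat (s * N) (s * N)" "Pi \<in> carrier_mat (s * N) (s * N)"
      "Ci * (adj P * D * P) = 1\<^sub>m (s * N)" "R * D * P * Pi = 1\<^sub>m (s * N)" for Ci Pi
    using coarse_correction_eq[OF coarse_setting that[unfolded R]] by (simp add: R)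
  then show ?thesis
    using galerkin_eq_petrov_galerkin[OF coarse_setting]
      petrov_galerkin_hermitian[OF coarse_setting gamma5_hermitian]
      galerkin_gamma5_hermitian[OF coarse_setting gamma5_hermitian]
      fov_galerkin_subset[OF D prolongation_carrier prolongation_orthonormal]
    by (auto simp: R G5c_def)
qed

end
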